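(* Let $v_1,v_2$ be two vertices of $\mathscr{BG}_+(n)$ with associated collections $\mathscr{D}_1,\mathscr{D}_2$, such that $\bigcap\mathscr{D}_1=\{i\}=\bigcap\mathscr{D}_2$ for some $i\in N$. Then $v_1$ and $v_2$ are adjacent if and only if either $\mathscr{D}_1\subseteq\mathscr{D}_2$ or $\mathscr{D}_2\subseteq\mathscr{D}_1$, and $|\mathscr{D}_1\,\Delta\,\mathscr{D}_2|=1$.
   Context: $N=\{1,\ldots,n\}$; a game is a map $v:2^N\to\mathbb{R}$ with $v(\varnothing)=0$. $\mathscr{BG}_+(n)$ is the polytope (in $\mathbb{R}^{2^N\setminus\{\varnothing,N\}}$) of games with $v\geqslant0$, $v(N)=1$ and nonempty core $C(v)=\{x\in\mathbb{R}^N:\sum_{i\in S}x_i\geqslant v(S)\ \forall S,\ \sum_{i\in N}x_i=v(N)\}$. The collection associated to a vertex $v$ is $\mathscr{D}=\{S:\varnothing\neq S\subsetneq N,\ v(S)=1\}$, and $\bigcap\mathscr{D}$ denotes the intersection of its members. Two vertices are adjacent if they lie on a common edge of the polytope. $\Delta$ is symmetric difference. *)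

theory Defs
  imports "HOL-Analysis.Analysis"
begin

text \<open>Player set N is the finite type 'n (N = UNIV). A game is a vector indexed by all
  coalitions; the coordinates at the empty set and at N are fixed (0 and 1), so the set
  below is an affine copy of the polytope BG_+(n) living in R^(2^N minus empty set and N).\<close>

definition core :: "real ^ ('n::finite set) \<Rightarrow> ('n \<Rightarrow> real) set" where
  "core v = {x. (\<forall>S. sum x S \<ge> v $ S) \<and> sum x UNIV = v $ UNIV}"

definition BGplus :: "(real ^ ('n::finite set)) set" where
  "BGplus = {v. v $ {} = 0 \<and> v $ UNIV = 1 \<and> (\<forall>S. v $ S \<ge> 0) \<and> core v \<noteq> {}}"

definition is_vertex :: "real ^ ('n::finite set) \<Rightarrow> bool" where
  "is_vertex v \<longleftrightarrow> v extreme_point_of BGplus"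

definition is_edge :: "(real ^ ('n::finite set)) set \<Rightarrow> bool" where
  "is_edge E \<longleftrightarrow> E face_of BGplus \<and> aff_dim E = 1"

definition adjacent :: "real ^ ('n::finite set) \<Rightarrow> real ^ ('n set) \<Rightarrow> bool" where
  "adjacent v1 v2 \<longleftrightarrow> (\<exists>E. is_edge E \<and> v1 \<in> E \<and> v2 \<in> E)"

definition coll :: "real ^ ('n::finite set) \<Rightarrow> 'n set set" where
  "coll v = {S. S \<noteq> {} \<and> S \<noteq> UNIV \<and> v $ S = 1}"

end

theory Submission
  imports Defs
begin

text \<open>Let \<open>i\<close> be the common element of \<open>\<Inter>(coll v\<^sub>1) = \<Inter>(coll v\<^sub>2)\<close>. A core allocation
  of such a game is nonnegative, has total 1 and is at least 1 on every winning coalition, so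
  it is concentrated on \<open>i\<close>; hence the game lies in the box between the unanimity games of
  \<open>N\<close> and of \<open>{i}\<close>, and that whole box lies in \<open>BGplus\<close>. So \<open>v\<^sub>1, v\<^sub>2\<close> are vertices of the
  box, i.e. 0/1-valued, and the symmetric difference of their collections is the set of
  coalitions where they differ. If they differ at two coalitions \<open>S, T\<close>, exchanging their
  \<open>S\<close>-coordinates gives two box points with the same midpoint; any face through \<open>v\<^sub>1, v\<^sub>2\<close>
  contains them, so it is not a segment. If they differ only at \<open>S\<close>, their segment is a
  face, since \<open>BGplus\<close> lies in the unit cube, where a 0/1 coordinate is never an interior
  convex combination.\<close>

lemma extreme_point_of_subset:
  "\<lbrakk>x extreme_point_of S; x \<in> T; T \<subseteq> S\<rbrakk> \<Longrightarrow> x extreme_point_of T"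
  unfolding extreme_point_of_def by blast

lemma extreme_point_of_cbox_cart:
  fixes a b x :: "real ^ 'n"
  assumes "x extreme_point_of cbox a b"
  shows "x $ k = a $ k \<or> x $ k = b $ k"
proof (rule ccontr)
  assume "\<not> ?thesis"
  moreover have x: "x \<in> cbox a b"
    using assms extreme_point_of_def by blast
  ultimately have "a $ k < x $ k" "x $ k < b $ k"
    by (auto simp: mem_box_cart less_le)
  define e where "e = min (x $ k - a $ k) (b $ k - x $ k)"
  have e: "0 < e" "e \<le> x $ k - a $ k" "e \<le> b $ k - x $ k"
    using \<open>a $ k < x $ k\<close> \<open>x $ k < b $ k\<close> by (auto simp: e_def)
  define y where "y = x - axis k e"
  define z where "z = x + axis k e"
  have "y \<in> cbox a b" "z \<in> cbox a b"
    using x e by (auto simp: mem_box_cart y_def z_def axis_def)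
  moreover have "x \<in> open_segment y z"
  proof -
    have "x = midpoint y z"
      by (simp add: y_def z_def midpoint_def vec_eq_iff)
    moreover have "y \<noteq> z"
      using e by (auto simp: y_def z_def vec_eq_iff axis_def)
    ultimately show ?thesis by simp
  qed
  ultimately show False
    using assms extreme_point_of_def by blast
qed

definition unanimity_game :: "'n set \<Rightarrow> real ^ ('n::finite set)" where
  "unanimity_game S = (\<chi> T. if S \<subseteq> T then 1 else 0)"

lemma core_nonneg:
  assumes "x \<in> core v" and "v $ {j} \<ge> 0"
  shows "x j \<ge> 0"
proof -
  have "v $ {j} \<le> sum x {j}"
    using assms(1) unfolding core_def by blast
  then show ?thesis
    using assms(2) by simp
qed

lemma BGplus_subset_unit_cube: "BGplus \<subseteq> cbox 0 1"
proof
  fix v :: "real ^ ('n::finite set)"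
  assume v: "v \<in> BGplus"
  then obtain x where x: "x \<in> core v"
    unfolding BGplus_def by blast
  have "v $ S \<le> 1" for S
  proof -
    have "v $ S \<le> sum x S"
      using x unfolding core_def by blast
    also have "\<dots> \<le> sum x UNIV"
      using v x core_nonneg by (intro sum_mono2) (auto simp: BGplus_def)
    also have "\<dots> = 1"
      using v x unfolding BGplus_def core_def by simp
    finally show ?thesis .
  qed
  then show "v \<in> cbox 0 1"
    using v by (simp add: mem_box_cart BGplus_def)
qed

lemma unanimity_box_subset_BGplus:
  fixes i :: "'n::finite"
  shows "cbox (unanimity_game UNIV) (unanimity_game {i}) \<subseteq> BGplus"
proof
  fix v :: "real ^ ('n set)"
  assume "v \<in> cbox (unanimity_game UNIV) (unanimity_game {i})"
  then have v: "(if UNIV \<subseteq> T then 1 else 0) \<le> v $ T \<and> v $ T \<le> (if i \<in> T then 1 else 0)" for T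
    by (simp add: mem_box_cart unanimity_game_def)
  have "v $ {} = 0"
    using v[of "{}"] by simp
  moreover have "v $ UNIV = 1"
    using v[of UNIV] by simp
  moreover from this have "(\<lambda>j. if j = i then 1 else 0) \<in> core v"
    using v by (auto simp: core_def)
  moreover have "v $ T \<ge> 0" for T
    using v[of T] by (metis (full_types) order_trans zero_le_one)
  ultimately show "v \<in> BGplus"
    unfolding BGplus_def by blast
qed

lemma BGplus_in_unanimity_box:
  assumes v: "v \<in> BGplus" and i: "\<Inter>(coll v) \<subseteq> {i}"
  shows "v \<in> cbox (unanimity_game UNIV) (unanimity_game {i})"
proof -
  obtain x where x: "x \<in> core v"
    using v unfolding BGplus_def by blast
  have x_nonneg: "x j \<ge> 0" for j
    using v x core_nonneg by (auto simp: BGplus_def)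
  have x_total: "sum x UNIV = 1"
    using v x unfolding BGplus_def core_def by simp
  have x_vanish: "x j = 0" if "j \<noteq> i" for j
  proof -
    have "j \<notin> \<Inter>(coll v)"
      using i that by blast
    then obtain S where S: "S \<in> coll v" "j \<notin> S"
      by blast
    have "1 = v $ S"
      using S(1) by (simp add: coll_def)
    also have "\<dots> \<le> sum x S"
      using x by (simp add: core_def)
    finally have "1 \<le> sum x S" .
    moreover have "x j \<le> sum x (UNIV - S)"
      using S(2) x_nonneg by (intro member_le_sum) auto
    moreover have "sum x UNIV = sum x S + sum x (UNIV - S)"
      using sum.subset_diff[of S UNIV x] by simp
    ultimately show ?thesis
      using x_total x_nonneg[of j] by linarith
  qed
  have upper: "v $ T \<le> (if i \<in> T then 1 else 0)" for T
  proof (cases "i \<in> T")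
    case True
    then show ?thesis
      using subsetD[OF BGplus_subset_unit_cube v] by (simp add: mem_box_cart)
  next
    case False
    have "v $ T \<le> sum x T"
      using x unfolding core_def by blast
    also have "\<dots> = 0"
      by (intro sum.neutral) (metis False x_vanish)
    finally show ?thesis
      using False by simp
  qed
  have lower: "(if UNIV \<subseteq> T then 1 else 0) \<le> v $ T" for T
    using v by (auto simp: BGplus_def top_unique)
  show ?thesis
    using upper lower by (simp add: mem_box_cart unanimity_game_def)
qed

lemma face_collinear_differ_in_one_coord:
  fixes v w :: "real ^ 'n"
  assumes E: "E face_of P" "collinear E" "v \<in> E" "w \<in> E"
    and box: "v \<in> cbox a b" "w \<in> cbox a b" "cbox a b \<subseteq> P"
    and S: "v $ S \<noteq> w $ S" and T: "v $ T \<noteq> w $ T"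
  shows "S = T"
proof (rule ccontr)
  assume "S \<noteq> T"
  define v' where "v' = (\<chi> U. if U = S then w $ U else v $ U)"
  define w' where "w' = (\<chi> U. if U = S then v $ U else w $ U)"
  have "v' \<in> cbox a b" "w' \<in> cbox a b"
    using box(1,2) unfolding mem_box_cart v'_def w'_def by simp_all
  then have "v' \<in> P" "w' \<in> P"
    using box(3) by blast+
  have "v' \<noteq> w'"
  proof
    assume "v' = w'"
    then have "v' $ S = w' $ S"
      by simp
    with S show False
      by (simp add: v'_def w'_def)
  qed
  moreover have "midpoint v' w' = midpoint v w"
    by (simp add: midpoint_def vec_eq_iff v'_def w'_def add.commute)
  ultimately have "midpoint v w \<in> open_segment v' w'"
    by (metis midpoint_in_open_segment)
  moreover have "midpoint v w \<in> E"
    using closed_segment_subset[OF E(3,4) face_of_imp_convex[OF E(1)]] midpoint_in_closed_segment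
    by blast
  ultimately have "v' \<in> E"
    using face_ofD[OF E(1) _ \<open>v' \<in> P\<close> \<open>w' \<in> P\<close>] by blast
  then have "collinear {v, w, v'}"
    using E(2-4) by (simp add: collinear_subset)
  moreover have "v \<noteq> w"
    using S by auto
  ultimately have "v' \<in> affine hull {v, w}"
    by (simp add: collinear_3_affine_hull)
  then obtain t where t: "v' = v + t *\<^sub>R (w - v)"
    by (auto simp: affine_hull_2_alt)
  have "w $ S = v $ S + t * (w $ S - v $ S)"
    using arg_cong[OF t, of "\<lambda>x. x $ S"] by (simp add: v'_def)
  then have "(1 - t) * (w $ S - v $ S) = 0"
    by (simp add: algebra_simps)
  then have "t = 1"
    using S by simp
  moreover have "v $ T = v $ T + t * (w $ T - v $ T)"
    using arg_cong[OF t, of "\<lambda>x. x $ T"] \<open>S \<noteq> T\<close> by (simp add: v'_def)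
  then have "t = 0"
    using T by simp
  ultimately show False
    by simp
qed

lemma closed_segment_eq_unit_edge:
  fixes v w :: "real ^ 'n"
  assumes S: "{v $ S, w $ S} = {0, 1}" and agree: "\<And>U. U \<noteq> S \<Longrightarrow> v $ U = w $ U"
  shows "closed_segment v w = {c. 0 \<le> c $ S \<and> c $ S \<le> 1 \<and> (\<forall>U. U \<noteq> S \<longrightarrow> c $ U = v $ U)}"
proof (intro equalityI subsetI)
  fix c
  assume "c \<in> closed_segment v w"
  then obtain t where t: "0 \<le> t" "t \<le> 1" "c = (1 - t) *\<^sub>R v + t *\<^sub>R w"
    unfolding in_segment by blast
  have "c $ S = t \<or> c $ S = 1 - t"
    using S t(3) by (auto simp: doubleton_eq_iff)
  moreover have "c $ U = v $ U" if "U \<noteq> S" for U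
  proof -
    have "c $ U = (1 - t) * v $ U + t * w $ U"
      using t(3) by simp
    then show ?thesis
      using agree[OF that] by (simp add: algebra_simps)
  qed
  ultimately show "c \<in> {c. 0 \<le> c $ S \<and> c $ S \<le> 1 \<and> (\<forall>U. U \<noteq> S \<longrightarrow> c $ U = v $ U)}"
    using t by auto
next
  fix c
  assume c: "c \<in> {c. 0 \<le> c $ S \<and> c $ S \<le> 1 \<and> (\<forall>U. U \<noteq> S \<longrightarrow> c $ U = v $ U)}"
  define t where "t = (if v $ S = 0 then c $ S else 1 - c $ S)"
  have "c = (1 - t) *\<^sub>R v + t *\<^sub>R w"
    unfolding vec_eq_iff
  proof
    fix U
    show "c $ U = ((1 - t) *\<^sub>R v + t *\<^sub>R w) $ U"
      using S c agree[of U] by (cases "U = S") (auto simp: t_def doubleton_eq_iff algebra_simps)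
  qed
  moreover have "0 \<le> t" "t \<le> 1"
    using c by (auto simp: t_def)
  ultimately show "c \<in> closed_segment v w"
    unfolding in_segment by blast
qed

lemma unit_edge_face_of:
  fixes v w :: "real ^ 'n"
  assumes P: "P \<subseteq> cbox 0 1" "closed_segment v w \<subseteq> P"
    and v01: "\<And>U. v $ U \<in> {0, 1}" and S: "{v $ S, w $ S} = {0, 1}"
    and agree: "\<And>U. U \<noteq> S \<Longrightarrow> v $ U = w $ U"
  shows "closed_segment v w face_of P"
  unfolding face_of_def
proof (intro conjI ballI impI)
  fix a b x
  assume ab: "a \<in> P" "b \<in> P" and x: "x \<in> closed_segment v w" "x \<in> open_segment a b"
  obtain u where u: "0 < u" "u < 1" "x = (1 - u) *\<^sub>R a + u *\<^sub>R b"
    using x(2) unfolding in_segment by blast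
  have "a $ U = v $ U \<and> b $ U = v $ U" if "U \<noteq> S" for U
  proof -
    have bounds: "0 \<le> a $ U" "a $ U \<le> 1" "0 \<le> b $ U" "b $ U \<le> 1"
      using ab P(1) by (auto simp: mem_box_cart)
    have comb: "(1 - u) * a $ U + u * b $ U = v $ U"
      using x(1) u(3) that by (simp add: closed_segment_eq_unit_edge[OF S agree])
    have vanish: "p = 0 \<and> q = 0" if "0 \<le> p" "0 \<le> q" "(1 - u) * p + u * q = 0" for p q
      using that u by (simp add: add_nonneg_eq_0_iff)
    show ?thesis
    proof (cases "v $ U = 0")
      case True
      then show ?thesis
        using vanish[of "a $ U" "b $ U"] comb bounds by simp
    next
      case False
      then have "v $ U = 1"
        using v01[of U] by simp
      moreover have "(1 - u) * (1 - a $ U) + u * (1 - b $ U) = 1 - ((1 - u) * a $ U + u * b $ U)"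
        by (simp add: algebra_simps)
      ultimately show ?thesis
        using vanish[of "1 - a $ U" "1 - b $ U"] comb bounds by simp
    qed
  qed
  then show "a \<in> closed_segment v w" "b \<in> closed_segment v w"
    using ab P(1) by (auto simp: closed_segment_eq_unit_edge[OF S agree] mem_box_cart)
qed (use P in auto)

lemma vertex_coord_zero_one:
  assumes "is_vertex v" and "\<Inter>(coll v) \<subseteq> {i}"
  shows "v $ T \<in> {0, 1}"
proof -
  have vertex: "v extreme_point_of BGplus"
    using assms(1) by (simp add: is_vertex_def)
  then have "v \<in> BGplus"
    by (simp add: extreme_point_of_def)
  then have "v \<in> cbox (unanimity_game UNIV) (unanimity_game {i})"
    using assms(2) by (rule BGplus_in_unanimity_box)
  then have "v extreme_point_of cbox (unanimity_game UNIV) (unanimity_game {i})"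
    by (rule extreme_point_of_subset[OF vertex _ unanimity_box_subset_BGplus])
  then have "v $ T = unanimity_game UNIV $ T \<or> v $ T = unanimity_game {i} $ T"
    by (rule extreme_point_of_cbox_cart)
  then show ?thesis
    by (auto simp: unanimity_game_def split: if_splits)
qed

lemma coll_sym_diff_eq:
  assumes "v $ {} = w $ {}" "v $ UNIV = w $ UNIV"
    and "\<And>T. v $ T \<in> {0, 1}" "\<And>T. w $ T \<in> {0, 1}"
  shows "sym_diff (coll v) (coll w) = {T. v $ T \<noteq> w $ T}"
proof (intro set_eqI)
  fix T
  show "T \<in> sym_diff (coll v) (coll w) \<longleftrightarrow> T \<in> {T. v $ T \<noteq> w $ T}"
  proof (cases "T = {} \<or> T = UNIV")
    case True
    then show ?thesis
      using assms(1,2) by (auto simp: coll_def)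
  next
    case False
    then show ?thesis
      using assms(3,4)[of T] by (auto simp: coll_def)
  qed
qed

lemma card_sym_diff_eq_1_imp_subset:
  assumes "card (sym_diff A B) = 1"
  shows "A \<subseteq> B \<or> B \<subseteq> A"
proof -
  obtain S where S: "sym_diff A B = {S}"
    using assms card_1_singletonE by blast
  show ?thesis
  proof (cases "S \<in> A")
    case True
    have "B - A \<subseteq> {S}"
      by (metis S Un_upper2)
    then have "B - A = {}"
      using True by auto
    then show ?thesis
      by blast
  next
    case False
    have "A - B \<subseteq> {S}"
      by (metis S Un_upper1)
    then have "A - B = {}"
      using False by auto
    then show ?thesis
      by blast
  qed
qed

lemma adjacent_iff_differ_in_one_coord:
  fixes v w :: "real ^ ('n::finite set)" and i :: 'n
  assumes box: "v \<in> cbox (unanimity_game UNIV) (unanimity_game {i})"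
      "w \<in> cbox (unanimity_game UNIV) (unanimity_game {i})"
    and "v \<noteq> w"
    and v01: "\<And>T. v $ T \<in> {0, 1}" and w01: "\<And>T. w $ T \<in> {0, 1}"
  shows "adjacent v w \<longleftrightarrow> (\<exists>S. {T. v $ T \<noteq> w $ T} = {S})"
proof
  assume "adjacent v w"
  then obtain E where E: "E face_of BGplus" "collinear E" "v \<in> E" "w \<in> E"
    unfolding adjacent_def is_edge_def by (auto simp: collinear_aff_dim)
  obtain S where S: "v $ S \<noteq> w $ S"
    using \<open>v \<noteq> w\<close> by (auto simp: vec_eq_iff)
  have "T = S" if "v $ T \<noteq> w $ T" for T
    using face_collinear_differ_in_one_coord[OF E box unanimity_box_subset_BGplus that S] .
  then have "{T. v $ T \<noteq> w $ T} = {S}"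
    using S by blast
  then show "\<exists>S. {T. v $ T \<noteq> w $ T} = {S}" ..
next
  assume "\<exists>S. {T. v $ T \<noteq> w $ T} = {S}"
  then obtain S where S: "{T. v $ T \<noteq> w $ T} = {S}" ..
  then have agree: "v $ U = w $ U" if "U \<noteq> S" for U
    using that by blast
  have "v $ S \<noteq> w $ S"
    using S by blast
  then have S01: "{v $ S, w $ S} = {0, 1}"
    using v01[of S] w01[of S] by auto
  have "closed_segment v w \<subseteq> BGplus"
    using closed_segment_subset[OF box convex_box(1)] unanimity_box_subset_BGplus by blast
  then have face: "closed_segment v w face_of BGplus"
    using unit_edge_face_of[OF BGplus_subset_unit_cube _ v01 S01 agree] by blast
  have "aff_dim (closed_segment v w) = 1"
    using \<open>v \<noteq> w\<close> by (simp add: segment_convex_hull aff_dim_convex_hull)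
  with face show "adjacent v w"
    unfolding adjacent_def is_edge_def by (intro exI[of _ "closed_segment v w"]) auto
qed

theorem theorem13:
  fixes v1 v2 :: "real ^ ('n::finite set)" and i :: 'n
  assumes "is_vertex v1" and "is_vertex v2" and "v1 \<noteq> v2"
    and "\<Inter>(coll v1) = {i}" and "\<Inter>(coll v2) = {i}"
  shows "adjacent v1 v2 \<longleftrightarrow>
    ((coll v1 \<subseteq> coll v2 \<or> coll v2 \<subseteq> coll v1) \<and>
     card ((coll v1 - coll v2) \<union> (coll v2 - coll v1)) = 1)"
proof -
  have "v1 \<in> BGplus" "v2 \<in> BGplus"
    using assms(1,2) by (simp_all add: is_vertex_def extreme_point_of_def)
  then have box: "v1 \<in> cbox (unanimity_game UNIV) (unanimity_game {i})"
    "v2 \<in> cbox (unanimity_game UNIV) (unanimity_game {i})"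
    using assms(4,5) BGplus_in_unanimity_box by blast+
  have v01: "v1 $ T \<in> {0, 1}" "v2 $ T \<in> {0, 1}" for T
    using vertex_coord_zero_one[OF assms(1) equalityD1[OF assms(4)]]
      vertex_coord_zero_one[OF assms(2) equalityD1[OF assms(5)]] by blast+
  have fixed: "v1 $ {} = v2 $ {}" "v1 $ UNIV = v2 $ UNIV"
    using \<open>v1 \<in> BGplus\<close> \<open>v2 \<in> BGplus\<close> by (simp_all add: BGplus_def)
  have "card (sym_diff (coll v1) (coll v2)) = 1 \<longleftrightarrow> (\<exists>S. {T. v1 $ T \<noteq> v2 $ T} = {S})"
    unfolding coll_sym_diff_eq[OF fixed v01] One_nat_def by (rule card_1_singleton_iff)
  moreover have "adjacent v1 v2 \<longleftrightarrow> (\<exists>S. {T. v1 $ T \<noteq> v2 $ T} = {S})"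
    using box \<open>v1 \<noteq> v2\<close> v01 by (rule adjacent_iff_differ_in_one_coord)
  ultimately show ?thesis
    using card_sym_diff_eq_1_imp_subset by blast
qed

end
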